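(* Let $S$ be a (non-empty) right zero semigroup. Then $T=\begin{pmatrix}\ell^{1}(S)&\ell^{1}(S)\\0&\ell^{1}(S)\end{pmatrix}$ is not approximately biprojective.
   Context: A right zero semigroup is a semigroup with $st=t$ for all $s,t\in S$. For a Banach algebra $A$, $T=\begin{pmatrix}A&A\\0&A\end{pmatrix}$ is the algebra of upper triangular matrices with entries in $A$, matrix operations and norm $\|a\|+\|x\|+\|b\|$. A Banach algebra $B$ is approximately biprojective if there is a net $(\rho_\alpha)$ of continuous $B$-bimodule morphisms $B\to B\otimes_pB$ with $\pi_B\circ\rho_\alpha(b)\to b$ for all $b$, where $\pi_B(b\otimes c)=bc$. *)

theory Defs
  imports "HOL-Analysis.Analysis"
begin

definition right_zero_semigroup :: "('a \<Rightarrow> 'a \<Rightarrow> 'a) \<Rightarrow> bool" where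
  "right_zero_semigroup m \<longleftrightarrow> (\<forall>s t u. m (m s t) u = m s (m t u)) \<and> (\<forall>s t. m s t = t)"

definition l1 :: "('x \<Rightarrow> complex) set" where
  "l1 = {f. (\<lambda>x. norm (f x)) summable_on UNIV}"

definition l1norm :: "('x \<Rightarrow> complex) \<Rightarrow> real" where
  "l1norm f = (\<Sum>\<^sub>\<infinity>x. norm (f x))"

text \<open>Convolution product of l1(S) for a semigroup (S,m): delta_s * delta_t = delta_(m s t).\<close>
definition conv :: "('a \<Rightarrow> 'a \<Rightarrow> 'a) \<Rightarrow> ('a \<Rightarrow> complex) \<Rightarrow> ('a \<Rightarrow> complex) \<Rightarrow> 'a \<Rightarrow> complex" where
  "conv m f g w = (\<Sum>\<^sub>\<infinity>(s,t)\<in>{(s,t). m s t = w}. f s * g t)"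

text \<open>An element of
  T = [[l1(S), l1(S)],[0, l1(S)]] is a function u :: pos \<times> 'a \<Rightarrow> complex, with entries
  a = u(P11,-), x = u(P12,-), b = u(P22,-); its norm ||a||+||x||+||b|| is l1norm u.\<close>
datatype pos = P11 | P12 | P22

definition entry :: "('a \<times> 'b \<Rightarrow> complex) \<Rightarrow> 'a \<Rightarrow> 'b \<Rightarrow> complex" where
  "entry u i = (\<lambda>s. u (i, s))"

definition tmult :: "('a \<Rightarrow> 'a \<Rightarrow> 'a) \<Rightarrow> (pos \<times> 'a \<Rightarrow> complex) \<Rightarrow> (pos \<times> 'a \<Rightarrow> complex)
    \<Rightarrow> pos \<times> 'a \<Rightarrow> complex" where
  "tmult m u v = (\<lambda>(i, w). case i of
      P11 \<Rightarrow> conv m (entry u P11) (entry v P11) w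
    | P12 \<Rightarrow> conv m (entry u P11) (entry v P12) w + conv m (entry u P12) (entry v P22) w
    | P22 \<Rightarrow> conv m (entry u P22) (entry v P22) w)"

text \<open>Projective tensor product T \<otimes>_p T, realised (via the isometric identification
  l1(X) \<otimes>_p l1(Y) = l1(X \<times> Y), elementary tensor b \<otimes> c = (p,q) \<mapsto> b p * c q)
  as l1((pos \<times> 'a) \<times> (pos \<times> 'a)). Its T-bimodule actions a.(b\<otimes>c) = ab\<otimes>c and
  (b\<otimes>c).a = b\<otimes>ca, and the product map \<pi>(b\<otimes>c) = bc.\<close>
definition tens_lmult :: "('a \<Rightarrow> 'a \<Rightarrow> 'a) \<Rightarrow> (pos \<times> 'a \<Rightarrow> complex)
    \<Rightarrow> ((pos \<times> 'a) \<times> (pos \<times> 'a) \<Rightarrow> complex) \<Rightarrow> (pos \<times> 'a) \<times> (pos \<times> 'a) \<Rightarrow> complex" where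
  "tens_lmult m a F = (\<lambda>(p, q). tmult m a (\<lambda>p'. F (p', q)) p)"

definition tens_rmult :: "('a \<Rightarrow> 'a \<Rightarrow> 'a) \<Rightarrow> ((pos \<times> 'a) \<times> (pos \<times> 'a) \<Rightarrow> complex)
    \<Rightarrow> (pos \<times> 'a \<Rightarrow> complex) \<Rightarrow> (pos \<times> 'a) \<times> (pos \<times> 'a) \<Rightarrow> complex" where
  "tens_rmult m F a = (\<lambda>(p, q). tmult m (\<lambda>q'. F (p, q')) a q)"

definition delta :: "'x \<Rightarrow> 'x \<Rightarrow> complex" where
  "delta p = (\<lambda>x. if x = p then 1 else 0)"

definition tens_pi :: "('a \<Rightarrow> 'a \<Rightarrow> 'a) \<Rightarrow> ((pos \<times> 'a) \<times> (pos \<times> 'a) \<Rightarrow> complex)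
    \<Rightarrow> pos \<times> 'a \<Rightarrow> complex" where
  "tens_pi m F = (\<lambda>r. \<Sum>\<^sub>\<infinity>(p, q). F (p, q) * tmult m (delta p) (delta q) r)"

definition bimod_mor :: "('a \<Rightarrow> 'a \<Rightarrow> 'a)
    \<Rightarrow> ((pos \<times> 'a \<Rightarrow> complex) \<Rightarrow> ((pos \<times> 'a) \<times> (pos \<times> 'a) \<Rightarrow> complex)) \<Rightarrow> bool" where
  "bimod_mor m \<rho> \<longleftrightarrow>
     (\<forall>u\<in>l1. \<rho> u \<in> l1)
   \<and> (\<forall>u\<in>l1. \<forall>v\<in>l1. \<rho> (\<lambda>x. u x + v x) = (\<lambda>y. \<rho> u y + \<rho> v y))
   \<and> (\<forall>u\<in>l1. \<forall>c::complex. \<rho> (\<lambda>x. c * u x) = (\<lambda>y. c * \<rho> u y))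
   \<and> (\<exists>C. \<forall>u\<in>l1. l1norm (\<rho> u) \<le> C * l1norm u)
   \<and> (\<forall>a\<in>l1. \<forall>u\<in>l1. \<rho> (tmult m a u) = tens_lmult m a (\<rho> u)
                    \<and> \<rho> (tmult m u a) = tens_rmult m (\<rho> u) a)"

definition approx_biprojective :: "('a \<Rightarrow> 'a \<Rightarrow> 'a) \<Rightarrow> 'i itself \<Rightarrow> bool" where
  "approx_biprojective m (_ :: 'i itself) \<longleftrightarrow>
    (\<exists>(I :: 'i set) (le :: 'i \<Rightarrow> 'i \<Rightarrow> bool) \<rho>.
        I \<noteq> {}
      \<and> (\<forall>\<alpha>\<in>I. le \<alpha> \<alpha>)
      \<and> (\<forall>\<alpha>\<in>I. \<forall>\<beta>\<in>I. \<forall>\<gamma>\<in>I. le \<alpha> \<beta> \<longrightarrow> le \<beta> \<gamma> \<longrightarrow> le \<alpha> \<gamma>)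
      \<and> (\<forall>\<alpha>\<in>I. \<forall>\<beta>\<in>I. \<exists>\<gamma>\<in>I. le \<alpha> \<gamma> \<and> le \<beta> \<gamma>)
      \<and> (\<forall>\<alpha>\<in>I. bimod_mor m (\<rho> \<alpha>))
      \<and> (\<forall>b\<in>l1. \<forall>\<epsilon>>0. \<exists>\<alpha>\<^sub>0\<in>I. \<forall>\<alpha>\<in>I. le \<alpha>\<^sub>0 \<alpha> \<longrightarrow>
            l1norm (\<lambda>x. tens_pi m (\<rho> \<alpha> b) x - b x) < \<epsilon>))"

end

theory Submission
  imports Defs
begin

text \<open>In a right zero semigroup the convolution degenerates to f * g = (\<Sum>f) g, so the
  point masses E11, E12, E22 of T at a fixed s0 multiply like matrix units. For a
  T-bimodule morphism \<rho> with Y = \<rho>(E11), the identities E11 E12 = E12 = E12 E22 give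
  Y.E12 = E12.\<rho>(E22); comparing the coefficients at ((1,1,s),(1,2,s0)) shows that every row
  sum of the (1,1)-(1,1) block of Y vanishes. Hence the functional \<psi>(u) = \<Sum>w. u(1,1,w),
  of norm at most 1, kills \<pi>(Y) while \<psi>(E11) = 1, so \<parallel>\<pi>(\<rho>(E11)) - E11\<parallel> \<ge> 1 for every
  \<rho>, and no net of bimodule morphisms can be an approximate right inverse of \<pi>.\<close>

lemma conv_right_zero:
  assumes rz: "\<And>s t. m s t = t"
  shows "conv m f g w = (\<Sum>\<^sub>\<infinity>s. f s) * g w"
proof -
  have fiber: "{(s,t). m s t = w} = (\<lambda>s. (s,w)) ` UNIV" using rz by auto
  have "conv m f g w = (\<Sum>\<^sub>\<infinity>(s,t)\<in>(\<lambda>s. (s,w)) ` UNIV. f s * g t)"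
    unfolding conv_def fiber ..
  also have "\<dots> = (\<Sum>\<^sub>\<infinity>s. f s * g w)"
    by (subst infsum_reindex) (auto simp: inj_on_def o_def)
  also have "\<dots> = (\<Sum>\<^sub>\<infinity>s. f s) * g w" by (rule infsum_cmult_left')
  finally show ?thesis .
qed

lemma has_sum_single_support:
  fixes f :: "'x \<Rightarrow> 'b::{comm_monoid_add,topological_space}"
  assumes "\<And>x. x \<noteq> a \<Longrightarrow> f x = 0"
  shows "(f has_sum f a) UNIV"
proof -
  have "(f has_sum f a) {a}" using has_sum_finite[of "{a}" f] by simp
  then show ?thesis using has_sum_cong_neutral[of "{a}" UNIV f f "f a"] assms by auto
qed

lemma infsum_delta: "(\<Sum>\<^sub>\<infinity>x. delta a x) = 1"
  using has_sum_single_support[where f="delta a" and a=a] by (simp add: delta_def infsumI)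

lemma delta_in_l1: "delta a \<in> l1"
  using has_sum_single_support[where f="\<lambda>x. norm (delta a x)" and a=a]
  unfolding l1_def summable_on_def by (auto simp: delta_def)

lemma
  fixes f g :: "'x \<Rightarrow> 'b::{topological_ab_group_add, t2_space}"
  assumes "f summable_on A" "g summable_on A"
  shows summable_on_diff: "(\<lambda>x. f x - g x) summable_on A"
    and infsum_diff: "(\<Sum>\<^sub>\<infinity>x\<in>A. f x - g x) = infsum f A - infsum g A"
proof -
  have minus_g: "(\<lambda>x. - g x) summable_on A" using assms(2) by (simp add: summable_on_uminus)
  show "(\<lambda>x. f x - g x) summable_on A"
    using summable_on_add[OF assms(1) minus_g] by simp
  show "(\<Sum>\<^sub>\<infinity>x\<in>A. f x - g x) = infsum f A - infsum g A"
    using infsum_add[OF assms(1) minus_g] by (simp add: infsum_uminus)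
qed

lemma l1_iff_summable: "u \<in> l1 \<longleftrightarrow> u summable_on UNIV"
  unfolding l1_def using summable_on_iff_abs_summable_on_complex by auto

lemma summable_on_comp_inj:
  fixes f :: "'x \<Rightarrow> 'b::banach"
  assumes "f summable_on UNIV" "inj h"
  shows "(\<lambda>w. f (h w)) summable_on UNIV"
proof -
  have "f summable_on range h" by (rule summable_on_subset_banach[OF assms(1)]) auto
  then show ?thesis using summable_on_reindex[of h UNIV f] assms(2) by (simp add: o_def)
qed

lemma norm_infsum_comp_inj_le_l1norm:
  assumes "u \<in> l1" "inj h"
  shows "norm (\<Sum>\<^sub>\<infinity>w. u (h w)) \<le> l1norm u"
proof -
  have nu: "(\<lambda>x. norm (u x)) summable_on UNIV" using assms(1) unfolding l1_def by blast
  have "norm (\<Sum>\<^sub>\<infinity>w. u (h w)) \<le> (\<Sum>\<^sub>\<infinity>w. norm (u (h w)))"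
    using summable_on_comp_inj[OF nu assms(2)] by (intro norm_infsum_bound) simp
  also have "\<dots> = (\<Sum>\<^sub>\<infinity>x\<in>range h. norm (u x))"
    using infsum_reindex[of h UNIV "\<lambda>x. norm (u x)"] assms(2) by (simp add: o_def)
  also have "\<dots> \<le> l1norm u"
    unfolding l1norm_def
    by (rule infsum_mono_neutral[OF summable_on_subset_banach[OF nu] nu]) auto
  finally show ?thesis .
qed

lemma entry_delta: "entry (delta (i,s)) j = (if i = j then delta s else (\<lambda>_. 0))"
  by (auto simp: entry_def delta_def fun_eq_iff)

definition unit_mult :: "pos \<Rightarrow> pos \<Rightarrow> pos \<Rightarrow> bool" where
  "unit_mult i j k \<longleftrightarrow> (i, j, k) \<in> {(P11, P11, P11), (P11, P12, P12), (P12, P22, P12), (P22, P22, P22)}"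

lemma unit_mult_unique: "unit_mult i j k \<Longrightarrow> unit_mult i j k' \<Longrightarrow> k = k'"
  by (auto simp: unit_mult_def)

lemma tmult_delta_right_zero:
  assumes rz: "\<And>s t. m s t = t"
  shows "tmult m (delta (i,s)) (delta (j,t)) (k,w) = (if unit_mult i j k \<and> t = w then 1 else 0)"
  by (cases i; cases j; cases k;
      simp add: tmult_def conv_right_zero[OF rz] entry_delta infsum_delta unit_mult_def;
      simp add: delta_def)

lemma
  assumes rz: "\<And>s t. m s t = t"
  shows tmult_delta_P11_P12: "tmult m (delta (P11,s)) (delta (P12,s)) = delta (P12,s)"
    and tmult_delta_P12_P22: "tmult m (delta (P12,s)) (delta (P22,s)) = delta (P12,s)"
  unfolding fun_eq_iff split_paired_All tmult_delta_right_zero[OF rz]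
  by (auto simp: unit_mult_def delta_def)

definition pi_fiber :: "pos \<times> 'a \<Rightarrow> ((pos \<times> 'a) \<times> (pos \<times> 'a)) set" where
  "pi_fiber r = {(p,q). unit_mult (fst p) (fst q) (fst r) \<and> snd q = snd r}"

lemma disjoint_family_pi_fiber: "disjoint_family pi_fiber"
  unfolding disjoint_family_on_def pi_fiber_def
  by (auto intro: prod_eqI dest: unit_mult_unique)

lemma tens_pi_eq_infsum_fiber:
  assumes rz: "\<And>s t. m s t = t"
  shows "tens_pi m Y r = infsum Y (pi_fiber r)"
proof -
  obtain k w where r: "r = (k,w)" by fastforce
  show ?thesis
    unfolding tens_pi_def r
    by (rule infsum_cong_neutral)
       (auto simp: pi_fiber_def tmult_delta_right_zero[OF rz] split: if_splits)
qed

lemma tens_pi_in_l1: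
  assumes rz: "\<And>s t. m s t = t" and "Y \<in> l1"
  shows "tens_pi m Y \<in> l1"
proof -
  have nY: "(\<lambda>x. norm (Y x)) summable_on UNIV" using assms(2) unfolding l1_def by blast
  have nY_fiber: "(\<lambda>x. norm (Y x)) summable_on (pi_fiber r)" for r
    by (rule summable_on_subset_banach[OF nY]) auto
  have fiber_sums: "(\<lambda>r. \<Sum>\<^sub>\<infinity>x\<in>pi_fiber r. norm (Y x)) summable_on UNIV"
    by (rule summable_on_UnionD[OF summable_on_subset_banach[OF nY] nY_fiber
          disjoint_family_pi_fiber]) auto
  have "norm (tens_pi m Y r) \<le> (\<Sum>\<^sub>\<infinity>x\<in>pi_fiber r. norm (Y x))" for r
    unfolding tens_pi_eq_infsum_fiber[OF rz] by (rule norm_infsum_bound) (use nY_fiber in simp)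
  then have "(\<lambda>r. norm (tens_pi m Y r)) summable_on UNIV"
    by (intro summable_on_comparison_test[OF fiber_sums]) auto
  then show ?thesis unfolding l1_def by blast
qed

lemma row_sum_tens_pi:
  assumes rz: "\<And>s t. m s t = t" and "Y \<in> l1"
  shows "(\<Sum>\<^sub>\<infinity>w. tens_pi m Y (P11,w)) = (\<Sum>\<^sub>\<infinity>s. \<Sum>\<^sub>\<infinity>w. Y ((P11,s),(P11,w)))"
proof -
  have fiber: "pi_fiber (P11,w) = (\<lambda>s. ((P11,s),(P11,w))) ` UNIV" for w :: 'a
    unfolding pi_fiber_def by (auto simp: unit_mult_def image_def)
  have pi_row: "tens_pi m Y (P11,w) = (\<Sum>\<^sub>\<infinity>s. Y ((P11,s),(P11,w)))" for w
    unfolding tens_pi_eq_infsum_fiber[OF rz] fiber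
    by (subst infsum_reindex) (auto simp: inj_on_def o_def)
  have "inj (\<lambda>(w::'a, s::'a). ((P11,s),(P11,w)))" by (auto simp: inj_on_def)
  from summable_on_comp_inj[OF assms(2)[unfolded l1_iff_summable] this]
  have "(\<lambda>(w,s). Y ((P11,s),(P11,w))) summable_on UNIV \<times> UNIV"
    by (simp add: split_def)
  then show ?thesis unfolding pi_row by (rule infsum_swap_banach)
qed

lemma bimod_mor_in_l1: "bimod_mor m \<rho> \<Longrightarrow> u \<in> l1 \<Longrightarrow> \<rho> u \<in> l1"
  unfolding bimod_mor_def by (elim conjE) blast

lemma
  assumes "bimod_mor m \<rho>" "a \<in> l1" "u \<in> l1"
  shows bimod_mor_lmult: "\<rho> (tmult m a u) = tens_lmult m a (\<rho> u)"
    and bimod_mor_rmult: "\<rho> (tmult m u a) = tens_rmult m (\<rho> u) a"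
  using assms unfolding bimod_mor_def by (elim conjE; blast)+

text \<open>The ((P11,s),(P12,s0)) coefficient of Y.E12 is a row sum of Y, that of E12.V is 0.\<close>
lemma bimod_mor_row_sum_zero:
  assumes rz: "\<And>s t. m s t = t" and "bimod_mor m \<rho>"
  shows "(\<Sum>\<^sub>\<infinity>t. \<rho> (delta (P11,s\<^sub>0)) ((P11,s),(P11,t))) = 0"
proof -
  let ?E11 = "delta (P11,s\<^sub>0)" and ?E12 = "delta (P12,s\<^sub>0)" and ?E22 = "delta (P22,s\<^sub>0)"
  have "tens_rmult m (\<rho> ?E11) ?E12 = \<rho> ?E12"
    using bimod_mor_rmult[OF assms(2), where a="?E12" and u="?E11"]
      tmult_delta_P11_P12[where m=m, OF rz]
    by (simp add: delta_in_l1)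
  also have "\<dots> = tens_lmult m ?E12 (\<rho> ?E22)"
    using bimod_mor_lmult[OF assms(2), where a="?E12" and u="?E22"]
      tmult_delta_P12_P22[where m=m, OF rz]
    by (simp add: delta_in_l1)
  finally have "tens_rmult m (\<rho> ?E11) ?E12 ((P11,s),(P12,s\<^sub>0))
      = tens_lmult m ?E12 (\<rho> ?E22) ((P11,s),(P12,s\<^sub>0))" by simp
  then show ?thesis
    by (simp add: tens_rmult_def tens_lmult_def tmult_def conv_right_zero[OF rz] entry_delta)
       (simp add: entry_def delta_def)
qed

lemma bimod_mor_far_from_unit:
  assumes rz: "\<And>s t. m s t = t" and \<rho>: "bimod_mor m \<rho>"
  shows "1 \<le> l1norm (\<lambda>x. tens_pi m (\<rho> (delta (P11,s\<^sub>0))) x - delta (P11,s\<^sub>0) x)"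
proof -
  define E where "E = delta (P11,s\<^sub>0)"
  define Z where "Z = tens_pi m (\<rho> E)"
  have "\<rho> E \<in> l1" unfolding E_def by (rule bimod_mor_in_l1[OF \<rho> delta_in_l1])
  then have Z: "Z \<in> l1" and row_Z: "(\<Sum>\<^sub>\<infinity>w. Z (P11,w)) = 0"
    unfolding Z_def
    by (rule tens_pi_in_l1[OF rz],
        simp only: row_sum_tens_pi[OF rz] E_def bimod_mor_row_sum_zero[OF rz \<rho>] infsum_0_simp)
  have E: "E \<in> l1" unfolding E_def by (rule delta_in_l1)
  have row_E: "(\<Sum>\<^sub>\<infinity>w. E (P11,w)) = 1"
    using infsum_delta[of s\<^sub>0] by (simp add: E_def delta_def)
  have inj: "inj (\<lambda>w::'a. (P11,w))" by (simp add: inj_on_def)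
  have "(\<lambda>w. Z (P11,w)) summable_on UNIV" "(\<lambda>w. E (P11,w)) summable_on UNIV"
    using Z E unfolding l1_iff_summable by (auto intro: summable_on_comp_inj[OF _ inj])
  then have "(\<Sum>\<^sub>\<infinity>w. Z (P11,w) - E (P11,w)) = -1"
    using row_Z row_E by (simp add: infsum_diff)
  moreover have "(\<lambda>x. Z x - E x) \<in> l1"
    using Z E unfolding l1_iff_summable by (rule summable_on_diff)
  ultimately show ?thesis
    using norm_infsum_comp_inj_le_l1norm[OF _ inj] unfolding Z_def E_def by fastforce
qed

theorem mainTheorem10:
  fixes m :: "'a \<Rightarrow> 'a \<Rightarrow> 'a"
  assumes "right_zero_semigroup m"
  shows "\<not> approx_biprojective m TYPE('i)"
proof
  assume "approx_biprojective m TYPE('i)"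
  then obtain I :: "'i set" and le \<rho> where
    refl: "\<forall>\<alpha>\<in>I. le \<alpha> \<alpha>" and mor: "\<forall>\<alpha>\<in>I. bimod_mor m (\<rho> \<alpha>)" and
    approx: "\<forall>b\<in>l1. \<forall>\<epsilon>>0. \<exists>\<alpha>\<^sub>0\<in>I. \<forall>\<alpha>\<in>I. le \<alpha>\<^sub>0 \<alpha> \<longrightarrow>
              l1norm (\<lambda>x. tens_pi m (\<rho> \<alpha> b) x - b x) < \<epsilon>"
    unfolding approx_biprojective_def by blast
  have rz: "\<And>s t. m s t = t" using assms unfolding right_zero_semigroup_def by blast
  obtain \<alpha> where "\<alpha> \<in> I" and
    "l1norm (\<lambda>x. tens_pi m (\<rho> \<alpha> (delta (P11,undefined))) x - delta (P11,undefined) x) < 1"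
    using approx delta_in_l1 refl by (meson zero_less_one)
  then show False using bimod_mor_far_from_unit[OF rz] mor by (meson not_less)
qed

end
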